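(* Let $\rho$ be a density operator on a $D$-dimensional Hilbert space with eigenvalues $\lambda_1,\dots,\lambda_D$ (with multiplicity), and let $0<\epsilon<1$. Let $x$ be the unique number $\ge\min_i\lambda_i$ with $\sum_i(x-\lambda_i)^+=\epsilon$ and $y$ the unique number with $\sum_i(\lambda_i-y)^+=\epsilon$, where $t^+=\max(t,0)$, and assume $x\le y$. Set $\mu_i=\min(\max(\lambda_i,x),y)$, i.e. eigenvalues below $x$ are raised to $x$, those above $y$ are lowered to $y$, and the others are unchanged. Then $$\inf_{\sigma\in\mathcal B^\epsilon(\rho)}\mathrm{tr}\,\sigma^2=\sum_{i=1}^D\mu_i^2,\qquad\text{so}\qquad S_2^\epsilon(\rho)=-\log_2\sum_{i=1}^D\mu_i^2 .$$ (In the paper this is applied to $\rho_{\vec XE}$, with $D=d^{3n}$ and the spectrum consisting of $0$ with multiplicity $d^{3n}-d^{2n}$ and $(\beta_0/d)^l(\beta_1/d)^{n-l}$ with multiplicity $d^n\binom nl(d-1)^{n-l}$, $0\le l\le n$.)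
   Context: Trace distance $\|\rho-\sigma\|=\frac12\mathrm{tr}|\rho-\sigma|$; $\mathcal B^\epsilon(\rho)$ is the set of density operators $\sigma$ on the same space with $\|\rho-\sigma\|\le\epsilon$. The $\epsilon$-smooth Rényi entropy of order $2$ is $S_2^\epsilon(\rho)=-\log_2\inf_{\sigma\in\mathcal B^\epsilon(\rho)}\mathrm{tr}\,\sigma^2$. *)

theory Defs
  imports Complex_Main "Jordan_Normal_Form.Char_Poly"
begin

definition adj_mat :: "complex mat \<Rightarrow> complex mat" where
  "adj_mat A = mat (dim_col A) (dim_row A) (\<lambda>(i,j). cnj (A $$ (j,i)))"

definition tr_mat :: "complex mat \<Rightarrow> complex" where
  "tr_mat A = (\<Sum>i<dim_row A. A $$ (i,i))"

definition hermitian_mat :: "complex mat \<Rightarrow> bool" where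
  "hermitian_mat A \<longleftrightarrow> adj_mat A = A"

definition psd_mat :: "nat \<Rightarrow> complex mat \<Rightarrow> bool" where
  "psd_mat n A \<longleftrightarrow> A \<in> carrier_mat n n \<and> hermitian_mat A \<and>
     (\<forall>v \<in> carrier_vec n. Im ((A *\<^sub>v v) \<bullet>c v) = 0 \<and> 0 \<le> Re ((A *\<^sub>v v) \<bullet>c v))"

definition density_op :: "nat \<Rightarrow> complex mat \<Rightarrow> bool" where
  "density_op D \<rho> \<longleftrightarrow> psd_mat D \<rho> \<and> tr_mat \<rho> = 1"

definition abs_mat :: "complex mat \<Rightarrow> complex mat" where
  "abs_mat A = (THE B. psd_mat (dim_col A) B \<and> B * B = adj_mat A * A)"

definition trace_dist :: "complex mat \<Rightarrow> complex mat \<Rightarrow> real" where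
  "trace_dist \<rho> \<sigma> = Re (tr_mat (abs_mat (\<rho> - \<sigma>))) / 2"

definition eps_ball :: "nat \<Rightarrow> real \<Rightarrow> complex mat \<Rightarrow> complex mat set" where
  "eps_ball D \<epsilon> \<rho> = {\<sigma>. density_op D \<sigma> \<and> trace_dist \<rho> \<sigma> \<le> \<epsilon>}"

definition smooth_renyi2 :: "nat \<Rightarrow> real \<Rightarrow> complex mat \<Rightarrow> real" where
  "smooth_renyi2 D \<epsilon> \<rho> = - log 2 (Inf ((\<lambda>\<sigma>. Re (tr_mat (\<sigma> * \<sigma>))) ` eps_ball D \<epsilon> \<rho>))"

definition pos_part :: "real \<Rightarrow> real" where
  "pos_part t = max t 0"

end

theory Submission
  imports Defs "Jordan_Normal_Form.Schur_Decomposition"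
begin

(* Diagonalise rho = U diag(lambda) U^*. The clipped state M = U diag(mu) U^* lies in the ball,
   because |lambda_i - mu_i| = (x - lambda_i)^+ + (lambda_i - y)^+ sums to 2 epsilon.
   It is optimal: for sigma in the ball write rho - sigma = P - Q with P, Q >= 0, so that
   tr P = tr Q = t <= epsilon. Since x I <= M <= y I,
     tr (M sigma) = tr (M rho) - tr (M P) + tr (M Q) >= tr (M rho) - (y - x) t,
   while tr (M rho) - tr M^2 = sum_i mu_i (lambda_i - mu_i) = (y - x) epsilon. Hence
     tr sigma^2 >= 2 tr (M sigma) - tr M^2 >= tr M^2 + 2 (y - x) (epsilon - t) >= tr M^2. *)

section \<open>Adjoints, traces and Hermitian matrices\<close>

lemma index_mult_mat_sum:
  "i < dim_row A \<Longrightarrow> j < dim_col B \<Longrightarrow> dim_col A = dim_row B \<Longrightarrow>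
    (A * B) $$ (i,j) = (\<Sum>k<dim_row B. A $$ (i,k) * B $$ (k,j))"
  by (simp add: scalar_prod_def atLeast0LessThan)

lemma index_mult_mat_vec_sum:
  "i < dim_row A \<Longrightarrow> dim_col A = dim_vec v \<Longrightarrow> (A *\<^sub>v v) $ i = (\<Sum>j<dim_vec v. A $$ (i,j) * v $ j)"
  by (simp add: scalar_prod_def atLeast0LessThan)

lemma cscalar_prod_sum: "v \<bullet>c w = (\<Sum>i<dim_vec w. v $ i * cnj (w $ i))"
  by (simp add: scalar_prod_def atLeast0LessThan)

lemma cscalar_prod_self_nonneg: "Im (v \<bullet>c v) = 0 \<and> 0 \<le> Re (v \<bullet>c v)"
  using conjugate_square_ge_0_vec[of v] by (simp add: less_eq_complex_def)

lemma mult_cnj_self_nonneg: "Im (z * cnj z) = 0 \<and> 0 \<le> Re (z * cnj z)"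
  by (simp add: complex_mult_cnj)

lemma cscalar_prod_smult:
  assumes "x \<in> carrier_vec n" "y \<in> carrier_vec n"
  shows "(a \<cdot>\<^sub>v x) \<bullet>c (b \<cdot>\<^sub>v y) = a * cnj b * (x \<bullet>c y)"
proof -
  have "(a \<cdot>\<^sub>v x) \<bullet>c (b \<cdot>\<^sub>v y) = (\<Sum>k<n. (a * x $ k) * cnj (b * y $ k))"
    using assms by (simp add: cscalar_prod_sum)
  also have "\<dots> = a * cnj b * (\<Sum>k<n. x $ k * cnj (y $ k))"
    by (simp add: sum_distrib_left mult_ac)
  finally show ?thesis
    using assms by (simp add: cscalar_prod_sum)
qed

lemma adj_mat_dim [simp]: "dim_row (adj_mat A) = dim_col A" "dim_col (adj_mat A) = dim_row A"
  by (auto simp: adj_mat_def)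

lemma adj_mat_index [simp]:
  "i < dim_col A \<Longrightarrow> j < dim_row A \<Longrightarrow> adj_mat A $$ (i,j) = cnj (A $$ (j,i))"
  unfolding adj_mat_def by simp

lemma adj_mat_carrier [simp]: "A \<in> carrier_mat n m \<Longrightarrow> adj_mat A \<in> carrier_mat m n"
  unfolding carrier_mat_def by simp

lemma adj_mat_adj_mat [simp]: "adj_mat (adj_mat A) = A"
  by (rule eq_matI) auto

lemma adj_mat_one [simp]: "adj_mat (1\<^sub>m n) = 1\<^sub>m n"
  by (rule eq_matI) auto

lemma adj_mat_zero [simp]: "adj_mat (0\<^sub>m n m) = 0\<^sub>m m n"
  by (rule eq_matI) auto

lemma adj_mat_mult:
  assumes "A \<in> carrier_mat n m" "B \<in> carrier_mat m k"
  shows "adj_mat (A * B) = adj_mat B * adj_mat A"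
proof (rule eq_matI)
  fix i j assume "i < dim_row (adj_mat B * adj_mat A)" "j < dim_col (adj_mat B * adj_mat A)"
  then have ij: "i < k" "j < n" using assms by auto
  have "adj_mat (A * B) $$ (i,j) = cnj (\<Sum>l<m. A $$ (j,l) * B $$ (l,i))"
    using ij assms by (simp add: index_mult_mat_sum del: index_mult_mat(1))
  also have "\<dots> = (\<Sum>l<m. adj_mat B $$ (i,l) * adj_mat A $$ (l,j))"
    using ij assms by (simp add: mult.commute)
  also have "\<dots> = (adj_mat B * adj_mat A) $$ (i,j)"
    using ij assms by (simp add: index_mult_mat_sum del: index_mult_mat(1))
  finally show "adj_mat (A * B) $$ (i,j) = (adj_mat B * adj_mat A) $$ (i,j)" .
qed (use assms in auto)

lemma adj_mat_minus:
  assumes "A \<in> carrier_mat n m" "B \<in> carrier_mat n m"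
  shows "adj_mat (A - B) = adj_mat A - adj_mat B"
  by (rule eq_matI) (use assms in auto)

lemma adj_mat_four_block_mat:
  assumes "A \<in> carrier_mat r1 c1" "B \<in> carrier_mat r1 c2" "C \<in> carrier_mat r2 c1" "D \<in> carrier_mat r2 c2"
  shows "adj_mat (four_block_mat A B C D)
    = four_block_mat (adj_mat A) (adj_mat C) (adj_mat B) (adj_mat D)"
proof (rule eq_matI)
  fix i j
  assume "i < dim_row (four_block_mat (adj_mat A) (adj_mat C) (adj_mat B) (adj_mat D))"
    "j < dim_col (four_block_mat (adj_mat A) (adj_mat C) (adj_mat B) (adj_mat D))"
  then have "i < c1 + c2" "j < r1 + r2" using assms by auto
  then show "adj_mat (four_block_mat A B C D) $$ (i,j)
      = four_block_mat (adj_mat A) (adj_mat C) (adj_mat B) (adj_mat D) $$ (i,j)"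
    using assms by (simp add: carrier_matD)
qed (use assms in \<open>simp_all add: carrier_matD\<close>)

lemma adj_mat_cscalar_prod:
  assumes A: "A \<in> carrier_mat n m" and x: "x \<in> carrier_vec m" and w: "w \<in> carrier_vec n"
  shows "(A *\<^sub>v x) \<bullet>c w = x \<bullet>c (adj_mat A *\<^sub>v w)"
proof -
  have "(A *\<^sub>v x) \<bullet>c w = (\<Sum>i<n. (\<Sum>j<m. A $$ (i,j) * x $ j) * cnj (w $ i))"
    using A x w by (simp add: cscalar_prod_sum index_mult_mat_vec_sum del: index_mult_mat_vec)
  also have "\<dots> = (\<Sum>i<n. \<Sum>j<m. x $ j * (A $$ (i,j) * cnj (w $ i)))"
    by (simp add: sum_distrib_left mult_ac)
  also have "\<dots> = (\<Sum>j<m. \<Sum>i<n. x $ j * (A $$ (i,j) * cnj (w $ i)))"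
    by (rule sum.swap)
  also have "\<dots> = x \<bullet>c (adj_mat A *\<^sub>v w)"
    using A x w by (simp add: cscalar_prod_sum index_mult_mat_vec_sum sum_distrib_left
        del: index_mult_mat_vec)
  finally show ?thesis .
qed

lemma hermitian_mat_index:
  assumes "hermitian_mat A" "A \<in> carrier_mat n n" "i < n" "k < n"
  shows "A $$ (i,k) = cnj (A $$ (k,i))"
  using adj_mat_index[of i A k] assms unfolding hermitian_mat_def by auto

lemma hermitian_mat_minus:
  assumes "hermitian_mat A" "hermitian_mat B" "A \<in> carrier_mat n n" "B \<in> carrier_mat n n"
  shows "hermitian_mat (A - B)"
  using assms adj_mat_minus[of A n n B] unfolding hermitian_mat_def by simp

lemma tr_mat_add:
  assumes "A \<in> carrier_mat n n" "B \<in> carrier_mat n n"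
  shows "tr_mat (A + B) = tr_mat A + tr_mat B"
  using assms by (auto simp: tr_mat_def sum.distrib)

lemma tr_mat_minus:
  assumes "A \<in> carrier_mat n n" "B \<in> carrier_mat n n"
  shows "tr_mat (A - B) = tr_mat A - tr_mat B"
  using assms by (auto simp: tr_mat_def sum_subtractf)

lemma tr_mat_mult_sum:
  assumes "A \<in> carrier_mat n m" "B \<in> carrier_mat m n"
  shows "tr_mat (A * B) = (\<Sum>i<n. \<Sum>k<m. A $$ (i,k) * B $$ (k,i))"
  using assms by (auto simp: tr_mat_def index_mult_mat_sum simp del: index_mult_mat(1))

lemma tr_mat_mult_commute:
  assumes "A \<in> carrier_mat n m" "B \<in> carrier_mat m n"
  shows "tr_mat (A * B) = tr_mat (B * A)"
  unfolding tr_mat_mult_sum[OF assms] tr_mat_mult_sum[OF assms(2,1)]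
  by (subst sum.swap) (simp add: mult.commute)

lemma tr_mat_mult_minus:
  assumes "A \<in> carrier_mat n n" "B \<in> carrier_mat n n" "C \<in> carrier_mat n n"
  shows "tr_mat (A * (B - C)) = tr_mat (A * B) - tr_mat (A * C)"
  using assms by (simp add: mult_minus_distrib_mat[where nr=n and n=n and nc=n] tr_mat_minus[of _ n])

lemma tr_mat_square_nonneg:
  assumes Y: "Y \<in> carrier_mat n n" and h: "hermitian_mat Y"
  shows "0 \<le> Re (tr_mat (Y * Y))"
proof -
  have "tr_mat (Y * Y) = (\<Sum>i<n. \<Sum>k<n. Y $$ (i,k) * cnj (Y $$ (i,k)))"
    unfolding tr_mat_mult_sum[OF Y Y]
  proof (intro sum.cong refl)
    fix i k assume "i \<in> {..<n}" "k \<in> {..<n}"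
    then show "Y $$ (i,k) * Y $$ (k,i) = Y $$ (i,k) * cnj (Y $$ (i,k))"
      using hermitian_mat_index[OF h Y, of k i] by simp
  qed
  then show ?thesis
    by (simp add: Re_sum sum_nonneg mult_cnj_self_nonneg)
qed

lemma tr_mat_square_ge:
  assumes A: "A \<in> carrier_mat n n" and B: "B \<in> carrier_mat n n"
    and hA: "hermitian_mat A" and hB: "hermitian_mat B"
  shows "2 * Re (tr_mat (A * B)) - Re (tr_mat (A * A)) \<le> Re (tr_mat (B * B))"
proof -
  have BA: "B - A \<in> carrier_mat n n" using A by (rule minus_carrier_mat)
  have e: "(B - A) $$ (i,k) = B $$ (i,k) - A $$ (i,k)" if "i < n" "k < n" for i k
    using that A by simp
  have "tr_mat ((B - A) * (B - A)) + tr_mat (A * B) + tr_mat (B * A) - tr_mat (A * A)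
    = (\<Sum>i<n. \<Sum>k<n. (B $$ (i,k) - A $$ (i,k)) * (B $$ (k,i) - A $$ (k,i)))
      + (\<Sum>i<n. \<Sum>k<n. A $$ (i,k) * B $$ (k,i)) + (\<Sum>i<n. \<Sum>k<n. B $$ (i,k) * A $$ (k,i))
      - (\<Sum>i<n. \<Sum>k<n. A $$ (i,k) * A $$ (k,i))"
    unfolding tr_mat_mult_sum[OF BA BA] tr_mat_mult_sum[OF A B] tr_mat_mult_sum[OF B A]
      tr_mat_mult_sum[OF A A]
    by (simp add: e)
  also have "\<dots> = (\<Sum>i<n. \<Sum>k<n. (B $$ (i,k) - A $$ (i,k)) * (B $$ (k,i) - A $$ (k,i))
      + A $$ (i,k) * B $$ (k,i) + B $$ (i,k) * A $$ (k,i) - A $$ (i,k) * A $$ (k,i))"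
    by (simp add: sum.distrib sum_subtractf)
  also have "\<dots> = tr_mat (B * B)"
    unfolding tr_mat_mult_sum[OF B B] by (intro sum.cong refl) (simp add: algebra_simps)
  finally have "tr_mat (B * B)
      = tr_mat ((B - A) * (B - A)) + tr_mat (A * B) + tr_mat (B * A) - tr_mat (A * A)" ..
  moreover have "tr_mat (B * A) = tr_mat (A * B)"
    by (rule tr_mat_mult_commute[OF B A])
  moreover have "0 \<le> Re (tr_mat ((B - A) * (B - A)))"
    using hermitian_mat_minus[OF hB hA B A] BA by (rule tr_mat_square_nonneg[rotated])
  ultimately show ?thesis by simp
qed

section \<open>Unitary conjugates of diagonal matrices\<close>

definition unitary :: "nat \<Rightarrow> complex mat \<Rightarrow> bool" where
  "unitary n U \<longleftrightarrow> U \<in> carrier_mat n n \<and> adj_mat U * U = 1\<^sub>m n"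

lemma unitary_carrier:
  assumes "unitary n U" shows "U \<in> carrier_mat n n" "adj_mat U \<in> carrier_mat n n"
  using assms unfolding unitary_def by auto

lemma unitary_left_inverse: "unitary n U \<Longrightarrow> adj_mat U * U = 1\<^sub>m n"
  unfolding unitary_def by simp

lemma unitary_right_inverse: "unitary n U \<Longrightarrow> U * adj_mat U = 1\<^sub>m n"
  unfolding unitary_def using mat_mult_left_right_inverse[of "adj_mat U" n U] by auto

lemma unitary_mult:
  assumes U: "unitary n U" and V: "unitary n V"
  shows "unitary n (U * V)"
proof -
  note carr = unitary_carrier[OF U] unitary_carrier[OF V]
  have "adj_mat (U * V) * (U * V) = adj_mat V * (adj_mat U * U) * V"
    using carr by (simp add: adj_mat_mult[of U n n V n] assoc_mult_mat[of _ n n _ n _ n] mult_carrier_mat[of _ n n _ n])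
  also have "\<dots> = 1\<^sub>m n"
    using carr by (simp add: unitary_left_inverse[OF U] unitary_left_inverse[OF V])
  finally show ?thesis
    using carr unfolding unitary_def by simp
qed

lemma unitary_conj_eq:
  assumes U: "unitary n U" and A: "A \<in> carrier_mat n n" and X: "adj_mat U * A * U = X"
  shows "A = U * X * adj_mat U"
proof -
  note carr = unitary_carrier[OF U]
  have "U * X * adj_mat U = (U * adj_mat U) * A * (U * adj_mat U)"
    unfolding X[symmetric] using carr A by (simp add: assoc_mult_mat[of _ n n _ n _ n] mult_carrier_mat[of _ n n _ n])
  also have "\<dots> = A"
    using unitary_right_inverse[OF U] A by simp
  finally show ?thesis ..
qed

lemma tr_mat_adj_conj:
  assumes U: "unitary n U" and P: "P \<in> carrier_mat n n"
  shows "tr_mat (adj_mat U * P * U) = tr_mat P"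
proof -
  note carr = unitary_carrier[OF U]
  have "tr_mat (adj_mat U * P * U) = tr_mat (U * (adj_mat U * P))"
    using carr P by (intro tr_mat_mult_commute[of _ n n]) auto
  also have "U * (adj_mat U * P) = (U * adj_mat U) * P"
    using carr P by (simp add: assoc_mult_mat[of _ n n _ n _ n] mult_carrier_mat[of _ n n _ n])
  finally show ?thesis
    using unitary_right_inverse[OF U] P by simp
qed

lemma index_adj_conj_diag:
  assumes A: "A \<in> carrier_mat n n" and U: "U \<in> carrier_mat n n" and i: "i < n"
  shows "(adj_mat U * A * U) $$ (i,i) = (A *\<^sub>v col U i) \<bullet>c col U i"
proof -
  have "(adj_mat U * A * U) $$ (i,i) = (\<Sum>k<n. adj_mat U $$ (i,k) * (A * U) $$ (k,i))"
    using A U i by (simp add: assoc_mult_mat[of _ n n _ n _ n] mult_carrier_mat[of _ n n _ n] index_mult_mat_sum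
        del: index_mult_mat(1))
  also have "\<dots> = (\<Sum>k<n. (A *\<^sub>v col U i) $ k * cnj (col U i $ k))"
    using A U i by (intro sum.cong refl) (simp add: index_mult_mat_sum index_mult_mat_vec_sum
        mult.commute del: index_mult_mat(1) index_mult_mat_vec)
  also have "\<dots> = (A *\<^sub>v col U i) \<bullet>c col U i"
    using U by (simp add: cscalar_prod_sum)
  finally show ?thesis .
qed

lemma index_mat_diag [simp]:
  "i < n \<Longrightarrow> j < n \<Longrightarrow> mat_diag n f $$ (i,j) = (if i = j then f i else 0)"
  "dim_row (mat_diag n f) = n" "dim_col (mat_diag n f) = n"
  by (auto simp: mat_diag_def)

lemma mat_diag_cong: "(\<And>i. i < n \<Longrightarrow> f i = g i) \<Longrightarrow> mat_diag n f = mat_diag n g"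
  by (rule eq_matI) simp_all

lemma adj_mat_mat_diag: "adj_mat (mat_diag n f) = mat_diag n (\<lambda>i. cnj (f i))"
  by (rule eq_matI) auto

lemma mat_diag_minus:
  "mat_diag n f - mat_diag n g = mat_diag n (\<lambda>i. f i - g i :: 'a :: ab_group_add)"
  by (rule eq_matI) simp_all

lemma tr_mat_mat_diag: "tr_mat (mat_diag n f) = (\<Sum>i<n. f i)"
  by (simp add: tr_mat_def)

lemma tr_mat_mat_diag_mult:
  assumes "X \<in> carrier_mat n n"
  shows "tr_mat (mat_diag n f * X) = (\<Sum>i<n. f i * X $$ (i,i))"
  using assms by (simp add: mat_diag_mult_left tr_mat_def)

lemma cscalar_prod_mat_diag:
  assumes w: "w \<in> carrier_vec n"
  shows "(mat_diag n f *\<^sub>v w) \<bullet>c w = (\<Sum>i<n. f i * (w $ i * cnj (w $ i)))"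
proof -
  have "(\<Sum>j<n. mat_diag n f $$ (i,j) * w $ j) = f i * w $ i" if "i < n" for i
    using that by (subst sum.remove[of _ i]) auto
  then show ?thesis
    using w by (simp add: cscalar_prod_sum index_mult_mat_vec_sum mult.assoc
        del: index_mult_mat_vec index_mat_diag(1))
qed

lemma unitary_conj_mat_diag_mult:
  assumes U: "unitary n U"
  shows "(U * mat_diag n f * adj_mat U) * (U * mat_diag n g * adj_mat U)
    = U * mat_diag n (\<lambda>i. f i * g i) * adj_mat U"
proof -
  note carr = unitary_carrier[OF U]
  have "(U * mat_diag n f * adj_mat U) * (U * mat_diag n g * adj_mat U)
      = U * mat_diag n f * ((adj_mat U * U) * mat_diag n g * adj_mat U)"
    using carr by (simp add: assoc_mult_mat[of _ n n _ n _ n] mult_carrier_mat[of _ n n _ n])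
  also have "\<dots> = U * (mat_diag n f * mat_diag n g) * adj_mat U"
    using carr by (simp add: unitary_left_inverse[OF U] assoc_mult_mat[of _ n n _ n _ n]
        mult_carrier_mat[of _ n n _ n] del: mat_diag_diag)
  finally show ?thesis
    by simp
qed

lemma unitary_conj_mat_diag_minus:
  assumes U: "unitary n U"
  shows "U * mat_diag n f * adj_mat U - U * mat_diag n g * adj_mat U
    = U * mat_diag n (\<lambda>i. f i - g i) * adj_mat U"
proof -
  note carr = unitary_carrier[OF U]
  have "U * mat_diag n f * adj_mat U - U * mat_diag n g * adj_mat U
      = (U * mat_diag n f - U * mat_diag n g) * adj_mat U"
    using carr by (subst minus_mult_distrib_mat[where nr=n and n=n and nc=n]) auto
  also have "U * mat_diag n f - U * mat_diag n g = U * (mat_diag n f - mat_diag n g)"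
    using carr by (subst mult_minus_distrib_mat[where nr=n and n=n and nc=n]) auto
  finally show ?thesis
    by (simp add: mat_diag_minus)
qed

lemma tr_mat_unitary_conj_mat_diag:
  assumes U: "unitary n U"
  shows "tr_mat (U * mat_diag n f * adj_mat U) = (\<Sum>i<n. f i)"
proof -
  note carr = unitary_carrier[OF U]
  have "tr_mat (U * mat_diag n f * adj_mat U) = tr_mat (adj_mat U * (U * mat_diag n f))"
    using carr by (intro tr_mat_mult_commute) auto
  also have "adj_mat U * (U * mat_diag n f) = mat_diag n f"
    using carr by (simp add: unitary_left_inverse[OF U] assoc_mult_mat[of _ n n _ n _ n, symmetric])
  finally show ?thesis
    by (simp add: tr_mat_mat_diag)
qed

lemma Re_tr_mat_unitary_conj_mat_diag:
  "unitary n U \<Longrightarrow> Re (tr_mat (U * mat_diag n (\<lambda>i. complex_of_real (f i)) * adj_mat U)) = (\<Sum>i<n. f i)"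
  by (simp add: tr_mat_unitary_conj_mat_diag Re_sum)

lemma tr_mat_unitary_conj_mat_diag_mult:
  assumes U: "unitary n U" and P: "P \<in> carrier_mat n n"
  shows "tr_mat (U * mat_diag n f * adj_mat U * P) = (\<Sum>i<n. f i * (adj_mat U * P * U) $$ (i,i))"
proof -
  note carr = unitary_carrier[OF U]
  have "tr_mat (U * mat_diag n f * adj_mat U * P) = tr_mat (U * (mat_diag n f * adj_mat U * P))"
    using carr P by (simp add: assoc_mult_mat[of _ n n _ n _ n] mult_carrier_mat[of _ n n _ n])
  also have "\<dots> = tr_mat ((mat_diag n f * adj_mat U * P) * U)"
    using carr P by (intro tr_mat_mult_commute[of _ n n]) auto
  also have "(mat_diag n f * adj_mat U * P) * U = mat_diag n f * (adj_mat U * P * U)"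
    using carr P by (simp add: assoc_mult_mat[of _ n n _ n _ n] mult_carrier_mat[of _ n n _ n])
  also have "tr_mat \<dots> = (\<Sum>i<n. f i * (adj_mat U * P * U) $$ (i,i))"
    using carr P by (intro tr_mat_mat_diag_mult) auto
  finally show ?thesis .
qed

lemma adj_mat_unitary_conj_mat_diag:
  assumes U: "unitary n U"
  shows "adj_mat (U * mat_diag n f * adj_mat U) = U * mat_diag n (\<lambda>i. cnj (f i)) * adj_mat U"
  using unitary_carrier[OF U]
  by (simp add: adj_mat_mult[of _ n n _ n] adj_mat_mat_diag assoc_mult_mat[of _ n n _ n _ n]
      mult_carrier_mat[of _ n n _ n])

lemma hermitian_unitary_conj_mat_diag:
  "unitary n U \<Longrightarrow> hermitian_mat (U * mat_diag n (\<lambda>i. complex_of_real (f i)) * adj_mat U)"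
  unfolding hermitian_mat_def by (simp add: adj_mat_unitary_conj_mat_diag)

lemma psd_unitary_conj_mat_diag:
  assumes U: "unitary n U" and f: "\<And>i. i < n \<Longrightarrow> 0 \<le> f i"
  shows "psd_mat n (U * mat_diag n (\<lambda>i. complex_of_real (f i)) * adj_mat U)"
proof -
  note carr = unitary_carrier[OF U]
  let ?D = "mat_diag n (\<lambda>i. complex_of_real (f i))"
  have "Im (((U * ?D * adj_mat U) *\<^sub>v v) \<bullet>c v) = 0 \<and> 0 \<le> Re (((U * ?D * adj_mat U) *\<^sub>v v) \<bullet>c v)"
    if v: "v \<in> carrier_vec n" for v
  proof -
    define w where "w = adj_mat U *\<^sub>v v"
    have w: "w \<in> carrier_vec n"
      unfolding w_def using carr(2) v by (rule mult_mat_vec_carrier)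
    have "((U * ?D * adj_mat U) *\<^sub>v v) \<bullet>c v = (U *\<^sub>v (?D *\<^sub>v w)) \<bullet>c v"
      unfolding w_def using carr v
      by (simp add: assoc_mult_mat_vec[of _ n n _ n] mult_carrier_mat[of _ n n _ n]
          mult_mat_vec_carrier[of _ n n] del: assoc_mult_mat_vec)
    also have "\<dots> = (?D *\<^sub>v w) \<bullet>c w"
      using adj_mat_cscalar_prod[OF carr(1) mult_mat_vec_carrier[OF mat_diag_dim w] v]
      by (simp add: w_def)
    also have "\<dots> = (\<Sum>i<n. complex_of_real (f i) * (w $ i * cnj (w $ i)))"
      using w by (rule cscalar_prod_mat_diag)
    finally show ?thesis
      unfolding Im_sum Re_sum using f mult_cnj_self_nonneg by (auto intro: sum_nonneg)
  qed
  then show ?thesis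
    unfolding psd_mat_def using hermitian_unitary_conj_mat_diag[OF U] carr by auto
qed

lemma psd_unitary_conj_mat_diagD:
  assumes U: "unitary n U" and P: "psd_mat n (U * mat_diag n (\<lambda>i. complex_of_real (f i)) * adj_mat U)"
    and i: "i < n"
  shows "0 \<le> f i"
proof -
  let ?A = "U * mat_diag n (\<lambda>i. complex_of_real (f i)) * adj_mat U"
  note carr = unitary_carrier[OF U]
  have "adj_mat U * ?A * U
      = (adj_mat U * U) * mat_diag n (\<lambda>i. complex_of_real (f i)) * (adj_mat U * U)"
    using carr by (simp add: assoc_mult_mat[of _ n n _ n _ n] mult_carrier_mat[of _ n n _ n])
  then have "adj_mat U * ?A * U = mat_diag n (\<lambda>i. complex_of_real (f i))"
    by (simp add: unitary_left_inverse[OF U])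
  moreover have "?A \<in> carrier_mat n n"
    using P unfolding psd_mat_def by simp
  ultimately have "complex_of_real (f i) = (?A *\<^sub>v col U i) \<bullet>c col U i"
    using index_adj_conj_diag[of ?A n U i] carr i by simp
  then show ?thesis
    using P i carr unfolding psd_mat_def by (metis Re_complex_of_real col_carrier_vec)
qed

section \<open>Positive semidefinite square roots\<close>

lemma psd_mat_carrier: "psd_mat n B \<Longrightarrow> B \<in> carrier_mat n n"
  unfolding psd_mat_def by simp

lemma psd_mat_hermitian: "psd_mat n B \<Longrightarrow> hermitian_mat B"
  unfolding psd_mat_def by simp

lemma psd_mat_quadratic_form:
  "psd_mat n B \<Longrightarrow> v \<in> carrier_vec n \<Longrightarrow> Im ((B *\<^sub>v v) \<bullet>c v) = 0 \<and> 0 \<le> Re ((B *\<^sub>v v) \<bullet>c v)"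
  unfolding psd_mat_def by simp

lemma nonneg_quadratic_linear_coeff_zero:
  fixes a b :: real
  assumes b: "b \<ge> 0" and q: "\<And>t. 0 \<le> 2 * t * a + t\<^sup>2 * b"
  shows "a = 0"
proof (rule ccontr)
  assume "a \<noteq> 0"
  define t where "t = - a / (b + 1)"
  have tb: "t * (b + 1) = - a"
    unfolding t_def using b by simp
  have "(b + 1)\<^sup>2 * (2 * t * a + t\<^sup>2 * b) = 2 * a * (b + 1) * (t * (b + 1)) + b * (t * (b + 1))\<^sup>2"
    by (simp add: algebra_simps power2_eq_square)
  also have "\<dots> = - (a\<^sup>2 * (b + 2))"
    unfolding tb by (simp add: algebra_simps power2_eq_square)
  also have "\<dots> < 0"
    using \<open>a \<noteq> 0\<close> b by (simp add: mult_pos_pos)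
  finally show False
    using q[of t] by (simp add: mult_less_0_iff)
qed

lemma quadratic_form_add_smult:
  assumes B: "B \<in> carrier_mat n n" and c: "c \<in> carrier_vec n" and w: "w \<in> carrier_vec n"
  shows "(B *\<^sub>v (c + a \<cdot>\<^sub>v w)) \<bullet>c (c + a \<cdot>\<^sub>v w)
    = (B *\<^sub>v c) \<bullet>c c + cnj a * ((B *\<^sub>v c) \<bullet>c w) + a * ((B *\<^sub>v w) \<bullet>c c)
      + a * cnj a * ((B *\<^sub>v w) \<bullet>c w)"
proof -
  have "B *\<^sub>v (c + a \<cdot>\<^sub>v w) = B *\<^sub>v c + a \<cdot>\<^sub>v (B *\<^sub>v w)"
    using B c w by (simp add: mult_add_distrib_mat_vec[of B n n] mult_mat_vec)
  moreover have "(x + a \<cdot>\<^sub>v y) \<bullet>c (c + a \<cdot>\<^sub>v w)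
      = x \<bullet>c c + cnj a * (x \<bullet>c w) + a * (y \<bullet>c c) + a * cnj a * (y \<bullet>c w)"
    if "x \<in> carrier_vec n" "y \<in> carrier_vec n" for x y
    using that c w
    by (simp add: cscalar_prod_sum sum.distrib sum_distrib_left algebra_simps)
  ultimately show ?thesis
    using B c w by simp
qed

lemma psd_mat_kernel:
  assumes P: "psd_mat n B" and c: "c \<in> carrier_vec n" and z: "(B *\<^sub>v c) \<bullet>c c = 0"
  shows "B *\<^sub>v c = 0\<^sub>v n"
proof -
  have Bc: "B \<in> carrier_mat n n"
    using P by (rule psd_mat_carrier)
  define w where "w = B *\<^sub>v c"
  have w: "w \<in> carrier_vec n"
    unfolding w_def using Bc c by simp
  have Bw_c: "(B *\<^sub>v w) \<bullet>c c = w \<bullet>c w"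
    using adj_mat_cscalar_prod[OF Bc w c] psd_mat_hermitian[OF P]
    unfolding hermitian_mat_def w_def by simp
  define a where "a = Re (w \<bullet>c w)"
  define b where "b = Re ((B *\<^sub>v w) \<bullet>c w)"
  have "b \<ge> 0"
    unfolding b_def using psd_mat_quadratic_form[OF P w] by simp
  moreover have "0 \<le> 2 * t * a + t\<^sup>2 * b" for t
  proof -
    let ?z = "c + complex_of_real t \<cdot>\<^sub>v w"
    have "0 \<le> Re ((B *\<^sub>v ?z) \<bullet>c ?z)"
      using psd_mat_quadratic_form[OF P] c w by simp
    also have "(B *\<^sub>v ?z) \<bullet>c ?z = 2 * complex_of_real t * (w \<bullet>c w)
        + (complex_of_real t)\<^sup>2 * ((B *\<^sub>v w) \<bullet>c w)"
      using quadratic_form_add_smult[OF Bc c w, of "complex_of_real t"] z Bw_c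
      by (simp add: w_def power2_eq_square)
    also have "Re \<dots> = 2 * t * a + t\<^sup>2 * b"
      unfolding a_def b_def by (simp add: power2_eq_square)
    finally show ?thesis .
  qed
  ultimately have "a = 0"
    by (rule nonneg_quadratic_linear_coeff_zero)
  then have "w \<bullet>c w = 0"
    using cscalar_prod_self_nonneg[of w] unfolding a_def by (simp add: complex_eq_iff)
  then show ?thesis
    using w unfolding w_def by simp
qed

lemma tr_mat_sandwich:
  assumes D: "D \<in> carrier_mat n n" and h: "hermitian_mat D" and B: "B \<in> carrier_mat n n"
  shows "tr_mat (D * (B * D)) = (\<Sum>i<n. (B *\<^sub>v col D i) \<bullet>c col D i)"
  unfolding tr_mat_mult_sum[OF D mult_carrier_mat[OF B D]]
proof (rule sum.cong[OF refl])
  fix i assume i: "i \<in> {..<n}"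
  have "(B *\<^sub>v col D i) \<bullet>c col D i = (\<Sum>k<n. (B *\<^sub>v col D i) $ k * cnj (col D i $ k))"
    using D by (simp add: cscalar_prod_sum)
  also have "\<dots> = (\<Sum>k<n. D $$ (i,k) * (B * D) $$ (k,i))"
  proof (rule sum.cong[OF refl])
    fix k assume k: "k \<in> {..<n}"
    have "(B *\<^sub>v col D i) $ k = (B * D) $$ (k,i)"
      using B D k i by (simp add: index_mult_mat_sum index_mult_mat_vec_sum
          del: index_mult_mat(1) index_mult_mat_vec)
    then show "(B *\<^sub>v col D i) $ k * cnj (col D i $ k) = D $$ (i,k) * (B * D) $$ (k,i)"
      using hermitian_mat_index[OF h D, of i k] i k D by simp
  qed
  finally show "(\<Sum>k<n. D $$ (i,k) * (B * D) $$ (k,i)) = (B *\<^sub>v col D i) \<bullet>c col D i"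
    by simp
qed

lemma hermitian_mat_col_eq_zero:
  assumes D: "D \<in> carrier_mat n n" and h: "hermitian_mat D" and i: "i < n"
    and Dd: "D *\<^sub>v col D i = 0\<^sub>v n"
  shows "col D i = 0\<^sub>v n"
proof -
  have "col D i \<bullet>c col D i = (\<Sum>k<n. D $$ (i,k) * col D i $ k)"
    using D i by (auto simp: cscalar_prod_sum hermitian_mat_index[OF h D, of i] mult.commute
        intro: sum.cong)
  also have "\<dots> = (D *\<^sub>v col D i) $ i"
    using D i by (simp add: index_mult_mat_vec_sum del: index_mult_mat_vec)
  finally have "col D i \<bullet>c col D i = 0"
    using Dd i by simp
  then show ?thesis
    using col_carrier_vec[OF i D] by simp
qed

lemma psd_mat_quadratic_forms_sum_zero:
  fixes m :: nat
  assumes P1: "psd_mat n B1" and P2: "psd_mat n B2" and v: "\<And>i. i < m \<Longrightarrow> v i \<in> carrier_vec n"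
    and s: "(\<Sum>i<m. (B1 *\<^sub>v v i) \<bullet>c v i + (B2 *\<^sub>v v i) \<bullet>c v i) = 0" and i: "i < m"
  shows "B1 *\<^sub>v v i = 0\<^sub>v n" "B2 *\<^sub>v v i = 0\<^sub>v n"
proof -
  let ?q = "\<lambda>B i. Re ((B *\<^sub>v v i) \<bullet>c v i)"
  have nonneg: "0 \<le> ?q B1 i" "0 \<le> ?q B2 i" if "i < m" for i
    using psd_mat_quadratic_form[OF P1 v] psd_mat_quadratic_form[OF P2 v] that by auto
  have "(\<Sum>i<m. ?q B1 i + ?q B2 i) = 0"
    using arg_cong[OF s, of Re] by (simp add: Re_sum)
  then have "?q B1 i + ?q B2 i = 0"
    using nonneg i by (subst (asm) sum_nonneg_eq_0_iff) (auto intro: add_nonneg_nonneg)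
  then have "?q B1 i = 0" "?q B2 i = 0"
    using nonneg[OF i] by linarith+
  then have "(B1 *\<^sub>v v i) \<bullet>c v i = 0" "(B2 *\<^sub>v v i) \<bullet>c v i = 0"
    using psd_mat_quadratic_form[OF P1 v[OF i]] psd_mat_quadratic_form[OF P2 v[OF i]]
    by (simp_all add: complex_eq_iff)
  then show "B1 *\<^sub>v v i = 0\<^sub>v n" "B2 *\<^sub>v v i = 0\<^sub>v n"
    using psd_mat_kernel[OF P1 v[OF i]] psd_mat_kernel[OF P2 v[OF i]] by auto
qed

lemma mult_minus_add_minus_mult:
  fixes A B :: "'a :: ring mat"
  assumes A: "A \<in> carrier_mat n n" and B: "B \<in> carrier_mat n n"
  shows "A * (A - B) + (A - B) * B = A * A - B * B"
proof (rule eq_matI)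
  fix i j assume "i < dim_row (A * A - B * B)" "j < dim_col (A * A - B * B)"
  then have ij: "i < n" "j < n"
    using B by auto
  have "(A * (A - B) + (A - B) * B) $$ (i,j) = (\<Sum>k<n. A $$ (i,k) * (A $$ (k,j) - B $$ (k,j)))
      + (\<Sum>k<n. (A $$ (i,k) - B $$ (i,k)) * B $$ (k,j))"
    using ij A B by (simp add: index_mult_mat_sum del: index_mult_mat(1))
  also have "\<dots> = (\<Sum>k<n. A $$ (i,k) * A $$ (k,j)) - (\<Sum>k<n. B $$ (i,k) * B $$ (k,j))"
    by (simp add: right_diff_distrib left_diff_distrib sum_subtractf)
  also have "\<dots> = (A * A - B * B) $$ (i,j)"
    using ij A B by (simp add: index_mult_mat_sum del: index_mult_mat(1))
  finally show "(A * (A - B) + (A - B) * B) $$ (i,j) = (A * A - B * B) $$ (i,j)" .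
qed (use A B in simp_all)

text \<open>With \<open>D = B\<^sub>1 - B\<^sub>2\<close>, \<open>B\<^sub>1\<^sup>2 = B\<^sub>2\<^sup>2\<close> gives \<open>B\<^sub>1 D + D B\<^sub>2 = 0\<close>,
  so \<open>tr (D B\<^sub>1 D) + tr (D B\<^sub>2 D) = 0\<close>. Both traces are sums of nonnegative quadratic forms
  in the columns of \<open>D\<close>, which therefore lie in the kernels of \<open>B\<^sub>1\<close> and \<open>B\<^sub>2\<close>, hence of \<open>D\<close>.\<close>

lemma psd_mat_equal_squares_col_diff:
  assumes P1: "psd_mat n B1" and P2: "psd_mat n B2" and sq: "B1 * B1 = B2 * B2" and i: "i < n"
  shows "col (B1 - B2) i = 0\<^sub>v n"
proof -
  have b1: "B1 \<in> carrier_mat n n" and b2: "B2 \<in> carrier_mat n n"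
    using P1 P2 psd_mat_carrier by auto
  define D where "D = B1 - B2"
  have Dc: "D \<in> carrier_mat n n"
    unfolding D_def using b2 by (rule minus_carrier_mat)
  have hD: "hermitian_mat D"
    unfolding D_def using hermitian_mat_minus[OF psd_mat_hermitian[OF P1] psd_mat_hermitian[OF P2] b1 b2] .
  have "D * (B1 * D) + D * (D * B2) = D * (B1 * D + D * B2)"
    using Dc b1 b2 by (intro mult_add_distrib_mat[of D n n, symmetric]) auto
  also have "B1 * D + D * B2 = 0\<^sub>m n n"
    unfolding D_def mult_minus_add_minus_mult[OF b1 b2] sq using b2 by simp
  finally have "tr_mat (D * (B1 * D)) + tr_mat (D * (D * B2)) = 0"
    using Dc b1 b2 tr_mat_add[of "D * (B1 * D)" n "D * (D * B2)"] by (simp add: tr_mat_def)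
  moreover have "tr_mat (D * (D * B2)) = tr_mat (D * (B2 * D))"
    using tr_mat_mult_commute[of D n n "D * B2"] assoc_mult_mat[OF Dc b2 Dc] Dc b2 by simp
  ultimately have "(\<Sum>i<n. (B1 *\<^sub>v col D i) \<bullet>c col D i + (B2 *\<^sub>v col D i) \<bullet>c col D i) = 0"
    unfolding tr_mat_sandwich[OF Dc hD b1, symmetric] tr_mat_sandwich[OF Dc hD b2, symmetric]
      sum.distrib by simp
  then have "B1 *\<^sub>v col D i = 0\<^sub>v n" "B2 *\<^sub>v col D i = 0\<^sub>v n"
    using psd_mat_quadratic_forms_sum_zero[OF P1 P2 _ _ i] Dc by auto
  then have "D *\<^sub>v col D i = 0\<^sub>v n"
    using i b1 b2 Dc unfolding D_def by (simp add: minus_mult_distrib_mat_vec[of B1 n n B2])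
  then show ?thesis
    using hermitian_mat_col_eq_zero[OF Dc hD i] unfolding D_def by simp
qed

lemma psd_mat_square_root_unique:
  assumes P1: "psd_mat n B1" and P2: "psd_mat n B2" and sq: "B1 * B1 = B2 * B2"
  shows "B1 = B2"
proof -
  have b1: "B1 \<in> carrier_mat n n" and b2: "B2 \<in> carrier_mat n n"
    using P1 P2 psd_mat_carrier by auto
  show ?thesis
  proof (rule eq_matI)
    fix k i assume "k < dim_row B2" "i < dim_col B2"
    then have ki: "k < n" "i < n"
      using b2 by auto
    then have "B1 $$ (k,i) - B2 $$ (k,i) = col (B1 - B2) i $ k"
      using b1 b2 by simp
    then show "B1 $$ (k,i) = B2 $$ (k,i)"
      using psd_mat_equal_squares_col_diff[OF P1 P2 sq ki(2)] ki by simp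
  qed (use b1 b2 in simp_all)
qed

section \<open>Spectral theorem for Hermitian matrices\<close>

lemma unitary_mat_of_cols:
  assumes len: "length ws = n" and ws: "set ws \<subseteq> carrier_vec n"
    and orth: "\<And>i j. i < n \<Longrightarrow> j < n \<Longrightarrow> ws ! j \<bullet>c ws ! i = (if i = j then 1 else 0)"
  shows "unitary n (mat_of_cols n ws)"
proof -
  let ?W = "mat_of_cols n ws"
  have Wc: "?W \<in> carrier_mat n n"
    using mat_of_cols_carrier(1)[of n ws] len by simp
  have "adj_mat ?W * ?W = 1\<^sub>m n"
  proof (rule eq_matI)
    fix i j assume "i < dim_row (1\<^sub>m n :: complex mat)" "j < dim_col (1\<^sub>m n :: complex mat)"
    then have ij: "i < n" "j < n" by auto
    have "(adj_mat ?W * ?W) $$ (i,j) = (\<Sum>k<n. ws ! j $ k * cnj (ws ! i $ k))"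
      using ij Wc len by (auto simp: index_mult_mat_sum mat_of_cols_def mult.commute
          simp del: index_mult_mat(1) intro: sum.cong)
    also have "\<dots> = ws ! j \<bullet>c ws ! i"
    proof -
      have "ws ! i \<in> carrier_vec n"
        using ws len ij(1) nth_mem[of i ws] by auto
      then show ?thesis
        by (simp add: cscalar_prod_sum)
    qed
    finally show "(adj_mat ?W * ?W) $$ (i,j) = (1\<^sub>m n :: complex mat) $$ (i,j)"
      using ij orth by simp
  qed (use Wc len in simp_all)
  then show ?thesis
    unfolding unitary_def using Wc by simp
qed

definition cvec_normalize :: "complex vec \<Rightarrow> complex vec" where
  "cvec_normalize w = (1 / complex_of_real (sqrt (Re (w \<bullet>c w)))) \<cdot>\<^sub>v w"

lemma unitary_mat_of_corthogonal:
  assumes orth: "corthogonal ws" and ws: "set ws \<subseteq> carrier_vec n" and len: "length ws = n"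
  shows "unitary n (mat_of_cols n (map cvec_normalize ws))"
proof (rule unitary_mat_of_cols)
  define r where "r w = complex_of_real (sqrt (Re (w \<bullet>c w)))" for w
  have wsi: "ws ! i \<in> carrier_vec n" if "i < n" for i
    using ws len that by auto
  have norm: "r (ws ! i) * cnj (r (ws ! i)) = ws ! i \<bullet>c ws ! i" "ws ! i \<bullet>c ws ! i \<noteq> 0"
    if "i < n" for i
  proof -
    show "ws ! i \<bullet>c ws ! i \<noteq> 0"
      using corthogonalD[OF orth, of i i] that len by auto
    have "ws ! i \<bullet>c ws ! i = complex_of_real (Re (ws ! i \<bullet>c ws ! i))"
      using cscalar_prod_self_nonneg[of "ws ! i"] by (simp add: complex_eq_iff)
    then show "r (ws ! i) * cnj (r (ws ! i)) = ws ! i \<bullet>c ws ! i"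
      unfolding r_def using cscalar_prod_self_nonneg[of "ws ! i"]
      by (simp add: of_real_mult[symmetric] del: of_real_mult)
  qed
  fix i j assume ij: "i < n" "j < n"
  have "map cvec_normalize ws ! j \<bullet>c map cvec_normalize ws ! i
      = (1 / r (ws ! j)) * cnj (1 / r (ws ! i)) * (ws ! j \<bullet>c ws ! i)"
    using ij len cscalar_prod_smult[OF wsi[OF ij(2)] wsi[OF ij(1)]]
    by (simp add: cvec_normalize_def r_def)
  then show "map cvec_normalize ws ! j \<bullet>c map cvec_normalize ws ! i = (if i = j then 1 else 0)"
    using corthogonalD[OF orth, of j i] ij len norm[OF ij(1)] by (auto simp: field_simps)
qed (use ws len in \<open>auto simp: cvec_normalize_def set_conv_nth\<close>)

lemma unitary_mat_with_first_col:
  assumes v: "v \<in> carrier_vec n" and v0: "v \<noteq> 0\<^sub>v n"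
  shows "\<exists>W c. unitary n W \<and> col W 0 = c \<cdot>\<^sub>v v"
proof -
  interpret cof_vec_space n "TYPE(complex)" .
  define b where "b = basis_completion v"
  from basis_completion[OF v v0, folded b_def]
  have dist_b: "distinct b" and indep: "\<not> lin_dep (set b)" and bc: "set b \<subseteq> carrier_vec n"
    and hdb: "hd b = v" and len_b: "length b = n" by auto
  have n0: "n \<noteq> 0"
    using v v0 by (auto intro: eq_vecI)
  from hdb len_b n0 obtain vs where bv: "b = v # vs"
    by (cases b) auto
  define ws where "ws = gram_schmidt n b"
  from gram_schmidt_result[OF bc dist_b indep ws_def]
  have orth: "corthogonal ws" and wsc: "set ws \<subseteq> carrier_vec n" and lenw: "length ws = n"
    by (auto simp: len_b)
  have "hd ws = v"
    unfolding ws_def bv using v by simp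
  then have "ws ! 0 = v"
    using lenw n0 hd_conv_nth[of ws] by force
  then have "col (mat_of_cols n (map cvec_normalize ws)) 0 = cvec_normalize v"
    using n0 lenw v by (subst col_mat_of_cols) (auto simp: cvec_normalize_def)
  then show ?thesis
    using unitary_mat_of_corthogonal[OF orth wsc lenw] unfolding cvec_normalize_def by blast
qed

lemma hermitian_adj_conj:
  assumes A: "A \<in> carrier_mat n n" and hA: "hermitian_mat A" and W: "W \<in> carrier_mat n n"
  shows "hermitian_mat (adj_mat W * A * W)"
  using A W hA unfolding hermitian_mat_def
  by (simp add: adj_mat_mult[of _ n n _ n] assoc_mult_mat[of _ n n _ n _ n] mult_carrier_mat[of _ n n _ n])

lemma adj_conj_eigenvector_first_col:
  assumes W: "unitary n W" and A: "A \<in> carrier_mat n n" and n: "0 < n"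
    and AW0: "A *\<^sub>v col W 0 = e \<cdot>\<^sub>v col W 0" and i: "i < n"
  shows "(adj_mat W * A * W) $$ (i,0) = (if i = 0 then e else 0)"
proof -
  note carr = unitary_carrier[OF W]
  have "(adj_mat W * A * W) $$ (i,0) = (adj_mat W *\<^sub>v col (A * W) 0) $ i"
    using carr A i n by (simp add: assoc_mult_mat[of _ n n _ n _ n])
  also have "col (A * W) 0 = e \<cdot>\<^sub>v col W 0"
    using col_mult2[OF A carr(1), of 0] n AW0 by simp
  also have "adj_mat W *\<^sub>v (e \<cdot>\<^sub>v col W 0) = e \<cdot>\<^sub>v (adj_mat W *\<^sub>v col W 0)"
    using carr n by (intro mult_mat_vec[of _ n n]) simp_all
  also have "(e \<cdot>\<^sub>v (adj_mat W *\<^sub>v col W 0)) $ i = e * (adj_mat W * W) $$ (i,0)"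
    using carr i n by simp
  finally show ?thesis
    using unitary_left_inverse[OF W] i n by simp
qed

lemma hermitian_mat_first_col_block:
  assumes A: "A \<in> carrier_mat n n" and hA: "hermitian_mat A" and n: "0 < n"
    and col0: "\<And>i. i < n \<Longrightarrow> A $$ (i,0) = (if i = 0 then e else 0)"
  defines "A3 \<equiv> mat (n - 1) (n - 1) (\<lambda>(i,j). A $$ (Suc i, Suc j))"
  shows "A = four_block_mat (mat 1 1 (\<lambda>_. e)) (0\<^sub>m 1 (n - 1)) (0\<^sub>m (n - 1) 1) A3"
    and "hermitian_mat A3"
proof -
  have "cnj e = e"
    using hermitian_mat_index[OF hA A n n] col0[OF n] by simp
  then have row0: "A $$ (0,j) = (if j = 0 then e else 0)" if "j < n" for j
    using hermitian_mat_index[OF hA A n that] col0[OF that] by auto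
  show "A = four_block_mat (mat 1 1 (\<lambda>_. e)) (0\<^sub>m 1 (n - 1)) (0\<^sub>m (n - 1) 1) A3"
  proof (rule eq_matI)
    fix i j
    assume "i < dim_row (four_block_mat (mat 1 1 (\<lambda>_. e)) (0\<^sub>m 1 (n - 1)) (0\<^sub>m (n - 1) 1) A3)"
      "j < dim_col (four_block_mat (mat 1 1 (\<lambda>_. e)) (0\<^sub>m 1 (n - 1)) (0\<^sub>m (n - 1) 1) A3)"
    then have ij: "i < n" "j < n"
      using n by (auto simp: A3_def)
    then show "A $$ (i,j) = four_block_mat (mat 1 1 (\<lambda>_. e)) (0\<^sub>m 1 (n - 1)) (0\<^sub>m (n - 1) 1) A3 $$ (i,j)"
      using row0 col0 n by (cases i; cases j) (auto simp: A3_def)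
  qed (use A n in \<open>auto simp: A3_def\<close>)
  show "hermitian_mat A3"
    unfolding hermitian_mat_def
  proof (rule eq_matI)
    fix i j assume "i < dim_row A3" "j < dim_col A3"
    then show "adj_mat A3 $$ (i,j) = A3 $$ (i,j)"
      using hermitian_mat_index[OF hA A, of "Suc i" "Suc j"] by (simp add: A3_def)
  qed (simp_all add: A3_def)
qed

lemma unitary_four_block_one:
  assumes V: "unitary m V"
  shows "unitary (1 + m) (four_block_mat (1\<^sub>m 1) (0\<^sub>m 1 m) (0\<^sub>m m 1) V)"
proof -
  note carr = unitary_carrier[OF V]
  let ?V' = "four_block_mat (1\<^sub>m 1) (0\<^sub>m 1 m) (0\<^sub>m m 1) V"
  have "adj_mat ?V' * ?V' = four_block_mat (1\<^sub>m 1) (0\<^sub>m 1 m) (0\<^sub>m m 1) (adj_mat V * V)"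
    using carr by (simp add: adj_mat_four_block_mat[of _ 1 1 _ m _ m]
        mult_four_block_mat[of _ 1 1 _ m _ m _ _ 1 _ m] mult_carrier_mat[of _ m m _ m])
  also have "\<dots> = 1\<^sub>m (1 + m)"
    using unitary_left_inverse[OF V] by simp
  finally show ?thesis
    unfolding unitary_def using four_block_carrier_mat[OF one_carrier_mat[of 1] carr(1)] by simp
qed

lemma four_block_one_conj:
  assumes V: "V \<in> carrier_mat m m" and A1: "A1 \<in> carrier_mat 1 1" and A3: "A3 \<in> carrier_mat m m"
  defines "V' \<equiv> four_block_mat (1\<^sub>m 1) (0\<^sub>m 1 m) (0\<^sub>m m 1) V"
  shows "adj_mat V' * four_block_mat A1 (0\<^sub>m 1 m) (0\<^sub>m m 1) A3 * V'
    = four_block_mat A1 (0\<^sub>m 1 m) (0\<^sub>m m 1) (adj_mat V * A3 * V)"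
  unfolding V'_def using V A1 A3
  by (simp add: adj_mat_four_block_mat[of _ 1 1 _ m _ m]
      mult_four_block_mat[of _ 1 1 _ m _ m _ _ 1 _ m] mult_carrier_mat[of _ m m _ m])

lemma similar_mat_adj_conj:
  assumes W: "unitary n W" and A: "A \<in> carrier_mat n n"
  shows "similar_mat (adj_mat W * A * W) A"
proof -
  note Wc = unitary_carrier[OF W]
  have "similar_mat_wit (adj_mat W * A * W) A (adj_mat W) W"
    using Wc A mult_carrier_mat[OF mult_carrier_mat[OF Wc(2) A] Wc(1)]
      unitary_right_inverse[OF W] unitary_left_inverse[OF W]
    by (intro similar_mat_witI[of "adj_mat W" W n]) auto
  then show ?thesis
    unfolding similar_mat_def by blast
qed

lemma hermitian_mat_deflation:
  assumes A: "A \<in> carrier_mat n n" and hA: "hermitian_mat A" and e: "eigenvalue A e"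
  shows "\<exists>W A3. unitary n W \<and> 0 < n \<and> A3 \<in> carrier_mat (n - 1) (n - 1) \<and> hermitian_mat A3
    \<and> adj_mat W * A * W = four_block_mat (mat 1 1 (\<lambda>_. e)) (0\<^sub>m 1 (n - 1)) (0\<^sub>m (n - 1) 1) A3"
proof -
  have ev: "eigenvector A (find_eigenvector A e) e"
    by (rule find_eigenvector[OF A e])
  then have n: "0 < n"
    using A unfolding eigenvector_def by (auto intro: eq_vecI)
  obtain W c where W: "unitary n W" and cW: "col W 0 = c \<cdot>\<^sub>v find_eigenvector A e"
    using unitary_mat_with_first_col ev A unfolding eigenvector_def by blast
  note Wc = unitary_carrier[OF W]
  have "A *\<^sub>v col W 0 = e \<cdot>\<^sub>v col W 0"
    using ev A mult_mat_vec[OF A, of _ c] unfolding cW eigenvector_def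
    by (auto simp: smult_smult_assoc mult.commute)
  then have col0: "(adj_mat W * A * W) $$ (i,0) = (if i = 0 then e else 0)" if "i < n" for i
    using adj_conj_eigenvector_first_col[OF W A n] that by simp
  have A'c: "adj_mat W * A * W \<in> carrier_mat n n"
    using mult_carrier_mat[OF mult_carrier_mat[OF Wc(2) A] Wc(1)] .
  show ?thesis
    using hermitian_mat_first_col_block[OF A'c hermitian_adj_conj[OF A hA Wc(1)] n col0] W n
    by (intro exI[of _ W] exI[of _ "mat (n - 1) (n - 1) (\<lambda>(i,j). (adj_mat W * A * W) $$ (Suc i, Suc j))"])
      auto
qed

lemma hermitian_unitary_diagonalization:
  assumes "A \<in> carrier_mat n n" "hermitian_mat A" "char_poly A = (\<Prod>e \<leftarrow> es. [:- e, 1:])"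
  shows "\<exists>U. unitary n U \<and> adj_mat U * A * U = mat_diag n (\<lambda>i. es ! i)"
  using assms
proof (induction es arbitrary: n A)
  case Nil
  then have "n = 0"
    using degree_monic_char_poly[OF Nil(1)] by simp
  then have "unitary n (1\<^sub>m n) \<and> adj_mat (1\<^sub>m n) * A * 1\<^sub>m n = mat_diag n (\<lambda>i. [] ! i)"
    using Nil(1) unfolding unitary_def by (auto intro!: eq_matI)
  then show ?case
    by blast
next
  case (Cons e es n A)
  note A = Cons.prems(1) and hA = Cons.prems(2)
  have cp: "char_poly A = [: -e, 1 :] * (\<Prod>e \<leftarrow> es. [:- e, 1:])"
    using Cons.prems(3) by simp
  have "eigenvalue A e"
    unfolding eigenvalue_root_char_poly[OF A] cp by simp
  then obtain W A3 where W: "unitary n W" and n: "0 < n" and A3: "A3 \<in> carrier_mat (n - 1) (n - 1)"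
    and hA3: "hermitian_mat A3"
    and block: "adj_mat W * A * W = four_block_mat (mat 1 1 (\<lambda>_. e)) (0\<^sub>m 1 (n - 1)) (0\<^sub>m (n - 1) 1) A3"
    using hermitian_mat_deflation[OF A hA] by blast
  have "[: -e, 1 :] * (\<Prod>e \<leftarrow> es. [:- e, 1:]) = char_poly (adj_mat W * A * W)"
    using cp char_poly_similar[OF similar_mat_adj_conj[OF W A]] by simp
  also have "\<dots> = [: -e, 1 :] * char_poly A3"
    unfolding block by (subst char_poly_four_block_zeros_col[OF _ _ A3])
      (auto simp: char_poly_defs det_def sign_def)
  finally have "char_poly A3 = (\<Prod>e \<leftarrow> es. [:- e, 1:])"
    by (metis mult_cancel_left pCons_eq_0_iff zero_neq_one)
  then obtain V where V: "unitary (n - 1) V"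
    and VA3: "adj_mat V * A3 * V = mat_diag (n - 1) (\<lambda>i. es ! i)"
    using Cons.IH[OF A3 hA3] by blast
  define V' where "V' = four_block_mat (1\<^sub>m 1) (0\<^sub>m 1 (n - 1)) (0\<^sub>m (n - 1) 1) V"
  have V': "unitary n V'"
    unfolding V'_def using unitary_four_block_one[OF V] n by simp
  have "adj_mat (W * V') * A * (W * V') = adj_mat V' * (adj_mat W * A * W) * V'"
    using unitary_carrier[OF W] unitary_carrier[OF V'] A
    by (simp add: adj_mat_mult[of _ n n _ n] assoc_mult_mat[of _ n n _ n _ n] mult_carrier_mat[of _ n n _ n])
  also have "\<dots> = four_block_mat (mat 1 1 (\<lambda>_. e)) (0\<^sub>m 1 (n - 1)) (0\<^sub>m (n - 1) 1) (adj_mat V * A3 * V)"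
    unfolding V'_def block using four_block_one_conj[OF unitary_carrier(1)[OF V] _ A3] by simp
  also have "\<dots> = mat_diag n (\<lambda>i. (e # es) ! i)"
    unfolding VA3 using n by (intro eq_matI) (auto simp: less_Suc_eq_0_disj nth_Cons')
  finally show ?case
    using unitary_mult[OF W V'] by blast
qed

lemma hermitian_unitary_diagonalization_real:
  assumes A: "A \<in> carrier_mat n n" and hA: "hermitian_mat A"
    and cp: "char_poly A = (\<Prod>a \<leftarrow> lam. [:- complex_of_real a, 1:])"
  shows "\<exists>U. unitary n U \<and> A = U * mat_diag n (\<lambda>i. complex_of_real (lam ! i)) * adj_mat U"
proof -
  have "char_poly A = (\<Prod>e \<leftarrow> map complex_of_real lam. [:- e, 1:])"
    using cp by (simp add: o_def)
  then obtain U where U: "unitary n U"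
    and UA: "adj_mat U * A * U = mat_diag n (\<lambda>i. map complex_of_real lam ! i)"
    using hermitian_unitary_diagonalization[OF A hA] by blast
  have "length lam = n"
    using degree_monic_char_poly[OF A] cp degree_linear_factors[of "\<lambda>a. - complex_of_real a" lam]
    by simp
  then have "mat_diag n (\<lambda>i. map complex_of_real lam ! i) = mat_diag n (\<lambda>i. complex_of_real (lam ! i))"
    by (intro mat_diag_cong) simp
  then show ?thesis
    using unitary_conj_eq[OF U A UA] U by auto
qed

lemma hermitian_unitary_diagonalization_exists:
  assumes A: "A \<in> carrier_mat n n" and hA: "hermitian_mat A"
  shows "\<exists>U f. unitary n U \<and> A = U * mat_diag n (\<lambda>i. complex_of_real (f i)) * adj_mat U"
proof -
  obtain es where "char_poly A = (\<Prod>a \<leftarrow> es. [:- a, 1:])"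
    using char_poly_factorized[OF A] by blast
  then obtain U where U: "unitary n U" and UA: "adj_mat U * A * U = mat_diag n (\<lambda>i. es ! i)"
    using hermitian_unitary_diagonalization[OF A hA] by blast
  have "hermitian_mat (mat_diag n (\<lambda>i. es ! i))"
    unfolding UA[symmetric] using hermitian_adj_conj[OF A hA unitary_carrier(1)[OF U]] .
  then have "es ! i = complex_of_real (Re (es ! i))" if "i < n" for i
    using hermitian_mat_index[OF _ mat_diag_dim that that] that by (simp add: complex_eq_iff)
  then have "mat_diag n (\<lambda>i. es ! i) = mat_diag n (\<lambda>i. complex_of_real (Re (es ! i)))"
    by (intro mat_diag_cong) simp
  then have "A = U * mat_diag n (\<lambda>i. complex_of_real (Re (es ! i))) * adj_mat U"
    using unitary_conj_eq[OF U A UA] by simp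
  with U show ?thesis
    by (intro exI[of _ U] exI[of _ "\<lambda>i. Re (es ! i)"]) simp
qed

section \<open>Absolute value and trace distance\<close>

text \<open>Since \<^const>\<open>abs_mat\<close> is defined by a definite description, evaluating it requires the
  uniqueness of positive semidefinite square roots.\<close>

lemma abs_mat_unitary_conj_mat_diag:
  assumes U: "unitary n U"
  shows "abs_mat (U * mat_diag n (\<lambda>i. complex_of_real (f i)) * adj_mat U)
    = U * mat_diag n (\<lambda>i. complex_of_real \<bar>f i\<bar>) * adj_mat U"
proof -
  let ?E = "U * mat_diag n (\<lambda>i. complex_of_real (f i)) * adj_mat U"
  let ?C = "U * mat_diag n (\<lambda>i. complex_of_real \<bar>f i\<bar>) * adj_mat U"
  have dim: "dim_col ?E = n"
    using unitary_carrier[OF U] by simp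
  have PC: "psd_mat n ?C"
    by (rule psd_unitary_conj_mat_diag[OF U]) simp
  have CC: "?C * ?C = adj_mat ?E * ?E"
    unfolding adj_mat_unitary_conj_mat_diag[OF U] unitary_conj_mat_diag_mult[OF U]
    by (simp add: of_real_mult[symmetric] del: of_real_mult)
  show ?thesis
    unfolding abs_mat_def dim
  proof (rule the_equality)
    show "psd_mat n ?C \<and> ?C * ?C = adj_mat ?E * ?E"
      using PC CC by simp
    show "B = ?C" if "psd_mat n B \<and> B * B = adj_mat ?E * ?E" for B
      using psd_mat_square_root_unique[OF _ PC, of B] that CC by simp
  qed
qed

lemma pos_part_minus: "pos_part t - pos_part (- t) = t"
  by (simp add: pos_part_def)

lemma hermitian_mat_jordan_decomposition:
  assumes E: "E \<in> carrier_mat n n" and hE: "hermitian_mat E"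
  shows "\<exists>P Q. psd_mat n P \<and> psd_mat n Q \<and> E = P - Q
    \<and> Re (tr_mat P) + Re (tr_mat Q) = Re (tr_mat (abs_mat E))"
proof -
  obtain V \<delta> where V: "unitary n V"
    and Ed: "E = V * mat_diag n (\<lambda>i. complex_of_real (\<delta> i)) * adj_mat V"
    using hermitian_unitary_diagonalization_exists[OF E hE] by blast
  define P where "P = V * mat_diag n (\<lambda>i. complex_of_real (pos_part (\<delta> i))) * adj_mat V"
  define Q where "Q = V * mat_diag n (\<lambda>i. complex_of_real (pos_part (- \<delta> i))) * adj_mat V"
  have "psd_mat n P" "psd_mat n Q"
    unfolding P_def Q_def by (auto intro!: psd_unitary_conj_mat_diag[OF V] simp: pos_part_def)
  moreover have "E = P - Q"
    unfolding P_def Q_def unitary_conj_mat_diag_minus[OF V] Ed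
    using pos_part_minus by (simp add: of_real_diff[symmetric] del: of_real_diff)
  moreover have "Re (tr_mat P) + Re (tr_mat Q) = Re (tr_mat (abs_mat E))"
    unfolding P_def Q_def Ed abs_mat_unitary_conj_mat_diag[OF V]
      Re_tr_mat_unitary_conj_mat_diag[OF V] sum.distrib[symmetric]
    by (intro sum.cong) (auto simp: pos_part_def)
  ultimately show ?thesis
    by blast
qed

lemma tr_mat_mult_psd_bounds:
  assumes U: "unitary n U" and X: "psd_mat n X" and \<mu>: "\<And>i. i < n \<Longrightarrow> a \<le> \<mu> i \<and> \<mu> i \<le> b"
  defines "M \<equiv> U * mat_diag n (\<lambda>i. complex_of_real (\<mu> i)) * adj_mat U"
  shows "a * Re (tr_mat X) \<le> Re (tr_mat (M * X))" and "Re (tr_mat (M * X)) \<le> b * Re (tr_mat X)"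
proof -
  note carr = unitary_carrier[OF U]
  have Xc: "X \<in> carrier_mat n n"
    using X by (rule psd_mat_carrier)
  define d where "d i = Re ((adj_mat U * X * U) $$ (i,i))" for i
  have d: "0 \<le> d i" if "i < n" for i
    unfolding d_def index_adj_conj_diag[OF Xc carr(1) that]
    using psd_mat_quadratic_form[OF X col_carrier_vec[OF that carr(1)]] by simp
  have "(\<Sum>i<n. d i) = Re (tr_mat (adj_mat U * X * U))"
    unfolding d_def tr_mat_def using carr Xc by (simp add: Re_sum)
  then have trX: "Re (tr_mat X) = (\<Sum>i<n. d i)"
    using tr_mat_adj_conj[OF U Xc] by simp
  have trMX: "Re (tr_mat (M * X)) = (\<Sum>i<n. \<mu> i * d i)"
    unfolding M_def tr_mat_unitary_conj_mat_diag_mult[OF U Xc] d_def by (simp add: Re_sum)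
  show "a * Re (tr_mat X) \<le> Re (tr_mat (M * X))"
    unfolding trX trMX sum_distrib_left by (intro sum_mono mult_right_mono) (use \<mu> d in auto)
  show "Re (tr_mat (M * X)) \<le> b * Re (tr_mat X)"
    unfolding trX trMX sum_distrib_left by (intro sum_mono mult_right_mono) (use \<mu> d in auto)
qed

text \<open>Write \<open>\<rho> - \<sigma> = P - Q\<close> with \<open>P, Q\<close> positive and \<open>tr P = tr Q\<close> equal to the trace
  distance; \<open>M\<close> is at most \<open>b\<close> on \<open>P\<close> and at least \<open>a\<close> on \<open>Q\<close>.\<close>

lemma tr_mat_mult_trace_dist_bound:
  assumes U: "unitary n U" and \<mu>: "\<And>i. i < n \<Longrightarrow> a \<le> \<mu> i \<and> \<mu> i \<le> b"
    and \<rho>: "\<rho> \<in> carrier_mat n n" "hermitian_mat \<rho>"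
    and \<sigma>: "\<sigma> \<in> carrier_mat n n" "hermitian_mat \<sigma>"
    and tr: "tr_mat \<rho> = tr_mat \<sigma>"
  defines "M \<equiv> U * mat_diag n (\<lambda>i. complex_of_real (\<mu> i)) * adj_mat U"
  shows "Re (tr_mat (M * \<rho>)) - (b - a) * trace_dist \<rho> \<sigma> \<le> Re (tr_mat (M * \<sigma>))"
proof -
  have Mc: "M \<in> carrier_mat n n"
    unfolding M_def using unitary_carrier[OF U] by (simp add: mult_carrier_mat[of _ n n _ n])
  obtain P Q where P: "psd_mat n P" and Q: "psd_mat n Q" and PQ: "\<rho> - \<sigma> = P - Q"
    and trPQ: "Re (tr_mat P) + Re (tr_mat Q) = Re (tr_mat (abs_mat (\<rho> - \<sigma>)))"
    using hermitian_mat_jordan_decomposition[OF minus_carrier_mat[OF \<sigma>(1)]]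
      hermitian_mat_minus[OF \<rho>(2) \<sigma>(2) \<rho>(1) \<sigma>(1)] by blast
  note PQc = psd_mat_carrier[OF P] psd_mat_carrier[OF Q]
  have "tr_mat P - tr_mat Q = 0"
    using arg_cong[OF PQ, of tr_mat] tr_mat_minus[OF \<rho>(1) \<sigma>(1)] tr_mat_minus[OF PQc] tr by simp
  then have trQ: "Re (tr_mat Q) = Re (tr_mat P)" and td: "trace_dist \<rho> \<sigma> = Re (tr_mat P)"
    using trPQ unfolding trace_dist_def by (simp_all add: complex_eq_iff)
  have "Re (tr_mat (M * \<sigma>)) = Re (tr_mat (M * \<rho>)) - Re (tr_mat (M * P)) + Re (tr_mat (M * Q))"
    using tr_mat_mult_minus[OF Mc \<rho>(1) \<sigma>(1)] tr_mat_mult_minus[OF Mc PQc] PQ by (simp add: complex_eq_iff)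
  moreover have "Re (tr_mat (M * P)) \<le> b * Re (tr_mat P)" "a * Re (tr_mat Q) \<le> Re (tr_mat (M * Q))"
    using tr_mat_mult_psd_bounds[OF U P \<mu>] tr_mat_mult_psd_bounds[OF U Q \<mu>] unfolding M_def by auto
  ultimately show ?thesis
    unfolding td using trQ by (simp add: algebra_simps)
qed

section \<open>The clipped spectrum\<close>

lemma clip_minus_eq:
  fixes l x y :: real
  shows "x \<le> y \<Longrightarrow> min (max l x) y - l = pos_part (x - l) - pos_part (l - y)"
  by (auto simp: pos_part_def min_def max_def)

lemma abs_minus_clip:
  fixes l x y :: real
  shows "x \<le> y \<Longrightarrow> \<bar>l - min (max l x) y\<bar> = pos_part (x - l) + pos_part (l - y)"
  by (auto simp: pos_part_def min_def max_def)

lemma clip_mult_minus: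
  fixes l x y :: real
  shows "x \<le> y \<Longrightarrow> min (max l x) y * (l - min (max l x) y) = y * pos_part (l - y) - x * pos_part (x - l)"
  by (auto simp: pos_part_def min_def max_def algebra_simps)

lemma clipped_state_in_eps_ball:
  fixes l :: "nat \<Rightarrow> real"
  assumes U: "unitary n U" and rho: "\<rho> = U * mat_diag n (\<lambda>i. complex_of_real (l i)) * adj_mat U"
    and tr: "(\<Sum>i<n. l i) = 1" and x0: "0 \<le> x" and xy: "x \<le> y"
    and sx: "(\<Sum>i<n. pos_part (x - l i)) = \<epsilon>" and sy: "(\<Sum>i<n. pos_part (l i - y)) = \<epsilon>"
  shows "U * mat_diag n (\<lambda>i. complex_of_real (min (max (l i) x) y)) * adj_mat U \<in> eps_ball n \<epsilon> \<rho>"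
proof -
  define \<mu> where "\<mu> i = min (max (l i) x) y" for i
  define M where "M = U * mat_diag n (\<lambda>i. complex_of_real (\<mu> i)) * adj_mat U"
  have "(\<Sum>i<n. \<mu> i) = (\<Sum>i<n. l i + (pos_part (x - l i) - pos_part (l i - y)))"
    unfolding \<mu>_def using clip_minus_eq[OF xy] by (intro sum.cong) (auto simp: algebra_simps)
  also have "\<dots> = 1"
    using tr sx sy by (simp add: sum.distrib sum_subtractf)
  finally have "tr_mat M = 1"
    unfolding M_def tr_mat_unitary_conj_mat_diag[OF U] by (simp flip: of_real_sum)
  moreover have "psd_mat n M"
    unfolding M_def using x0 xy by (intro psd_unitary_conj_mat_diag[OF U]) (auto simp: \<mu>_def)
  moreover have "trace_dist \<rho> M = (\<Sum>i<n. \<bar>l i - \<mu> i\<bar>) / 2"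
    unfolding trace_dist_def rho M_def unitary_conj_mat_diag_minus[OF U]
      of_real_diff[symmetric] abs_mat_unitary_conj_mat_diag[OF U] Re_tr_mat_unitary_conj_mat_diag[OF U] ..
  moreover have "(\<Sum>i<n. \<bar>l i - \<mu> i\<bar>) = 2 * \<epsilon>"
    unfolding \<mu>_def abs_minus_clip[OF xy] sum.distrib sx sy by simp
  ultimately show ?thesis
    unfolding eps_ball_def density_op_def M_def \<mu>_def by simp
qed

lemma tr_square_ge_clipped:
  fixes l :: "nat \<Rightarrow> real"
  assumes U: "unitary n U" and rho: "\<rho> = U * mat_diag n (\<lambda>i. complex_of_real (l i)) * adj_mat U"
    and tr\<rho>: "tr_mat \<rho> = 1" and xy: "x \<le> y"
    and sx: "(\<Sum>i<n. pos_part (x - l i)) = \<epsilon>" and sy: "(\<Sum>i<n. pos_part (l i - y)) = \<epsilon>"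
    and \<sigma>: "density_op n \<sigma>" and td: "trace_dist \<rho> \<sigma> \<le> \<epsilon>"
  shows "(\<Sum>i<n. (min (max (l i) x) y)\<^sup>2) \<le> Re (tr_mat (\<sigma> * \<sigma>))"
proof -
  define \<mu> where "\<mu> i = min (max (l i) x) y" for i
  define M where "M = U * mat_diag n (\<lambda>i. complex_of_real (\<mu> i)) * adj_mat U"
  note carr = unitary_carrier[OF U]
  have Mc: "M \<in> carrier_mat n n" and \<rho>c: "\<rho> \<in> carrier_mat n n"
    unfolding M_def rho using carr by (simp_all add: mult_carrier_mat[of _ n n _ n])
  have \<sigma>c: "\<sigma> \<in> carrier_mat n n" and h\<sigma>: "hermitian_mat \<sigma>" and tr\<sigma>: "tr_mat \<sigma> = 1"
    using \<sigma> unfolding density_op_def psd_mat_def by auto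
  have "(\<Sum>i<n. \<mu> i * l i) - (y - x) * trace_dist \<rho> \<sigma> \<le> Re (tr_mat (M * \<sigma>))"
  proof -
    have "Re (tr_mat (M * \<rho>)) = (\<Sum>i<n. \<mu> i * l i)"
      unfolding M_def rho unitary_conj_mat_diag_mult[OF U] of_real_mult[symmetric]
        Re_tr_mat_unitary_conj_mat_diag[OF U] ..
    moreover have "x \<le> \<mu> i \<and> \<mu> i \<le> y" for i
      unfolding \<mu>_def using xy by auto
    ultimately show ?thesis
      using tr_mat_mult_trace_dist_bound[OF U _ \<rho>c _ \<sigma>c h\<sigma>, of x \<mu> y] tr\<rho> tr\<sigma>
        hermitian_unitary_conj_mat_diag[OF U] rho unfolding M_def by auto
  qed
  moreover have "(\<Sum>i<n. \<mu> i * l i) - (\<Sum>i<n. (\<mu> i)\<^sup>2) = (y - x) * \<epsilon>"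
  proof -
    have "(\<Sum>i<n. \<mu> i * l i) - (\<Sum>i<n. (\<mu> i)\<^sup>2) = (\<Sum>i<n. \<mu> i * (l i - \<mu> i))"
      by (simp add: sum_subtractf[symmetric] algebra_simps power2_eq_square)
    also have "\<dots> = (\<Sum>i<n. y * pos_part (l i - y) - x * pos_part (x - l i))"
      unfolding \<mu>_def using clip_mult_minus[OF xy] by simp
    finally show ?thesis
      unfolding sum_subtractf sum_distrib_left[symmetric] sx sy by (simp add: algebra_simps)
  qed
  moreover have "Re (tr_mat (M * M)) = (\<Sum>i<n. (\<mu> i)\<^sup>2)"
    unfolding M_def unitary_conj_mat_diag_mult[OF U] of_real_mult[symmetric]
      Re_tr_mat_unitary_conj_mat_diag[OF U] by (simp add: power2_eq_square)
  moreover have "2 * Re (tr_mat (M * \<sigma>)) - Re (tr_mat (M * M)) \<le> Re (tr_mat (\<sigma> * \<sigma>))"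
    using tr_mat_square_ge[OF Mc \<sigma>c _ h\<sigma>] hermitian_unitary_conj_mat_diag[OF U] unfolding M_def by blast
  moreover have "0 \<le> (y - x) * (\<epsilon> - trace_dist \<rho> \<sigma>)"
    using xy td by simp
  ultimately show ?thesis
    unfolding \<mu>_def by (simp add: algebra_simps)
qed

lemma Inf_tr_square_eps_ball_clipped:
  fixes l :: "nat \<Rightarrow> real"
  assumes U: "unitary n U" and rho: "\<rho> = U * mat_diag n (\<lambda>i. complex_of_real (l i)) * adj_mat U"
    and tr: "(\<Sum>i<n. l i) = 1" and x0: "0 \<le> x" and xy: "x \<le> y"
    and sx: "(\<Sum>i<n. pos_part (x - l i)) = \<epsilon>" and sy: "(\<Sum>i<n. pos_part (l i - y)) = \<epsilon>"
  shows "Inf ((\<lambda>\<sigma>. Re (tr_mat (\<sigma> * \<sigma>))) ` eps_ball n \<epsilon> \<rho>) = (\<Sum>i<n. (min (max (l i) x) y)\<^sup>2)"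
proof (rule cInf_eq_minimum)
  let ?M = "U * mat_diag n (\<lambda>i. complex_of_real (min (max (l i) x) y)) * adj_mat U"
  have "Re (tr_mat (?M * ?M)) = (\<Sum>i<n. (min (max (l i) x) y)\<^sup>2)"
    unfolding unitary_conj_mat_diag_mult[OF U] of_real_mult[symmetric]
      Re_tr_mat_unitary_conj_mat_diag[OF U] by (simp add: power2_eq_square)
  then show "(\<Sum>i<n. (min (max (l i) x) y)\<^sup>2) \<in> (\<lambda>\<sigma>. Re (tr_mat (\<sigma> * \<sigma>))) ` eps_ball n \<epsilon> \<rho>"
    using clipped_state_in_eps_ball[OF U rho tr x0 xy sx sy] by force
  have "tr_mat \<rho> = 1"
    unfolding rho tr_mat_unitary_conj_mat_diag[OF U] using tr by (simp flip: of_real_sum)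
  then show "(\<Sum>i<n. (min (max (l i) x) y)\<^sup>2) \<le> r"
    if "r \<in> (\<lambda>\<sigma>. Re (tr_mat (\<sigma> * \<sigma>))) ` eps_ball n \<epsilon> \<rho>" for r
    using that tr_square_ge_clipped[OF U rho _ xy sx sy] unfolding eps_ball_def by auto
qed

theorem mainTheorem3:
  fixes D :: nat and \<rho> :: "complex mat" and lam :: "real list" and \<epsilon> x y :: real
  assumes dens: "density_op D \<rho>"
    and len: "length lam = D"
    and spec: "char_poly \<rho> = (\<Prod>a \<leftarrow> lam. [:- complex_of_real a, 1:])"
    and eps: "0 < \<epsilon>" "\<epsilon> < 1"
    and x_ge: "x \<ge> Min (set lam)"
    and x_def: "(\<Sum>i<D. pos_part (x - lam ! i)) = \<epsilon>"
    and y_def: "(\<Sum>i<D. pos_part (lam ! i - y)) = \<epsilon>"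
    and xy: "x \<le> y"
  shows "Inf ((\<lambda>\<sigma>. Re (tr_mat (\<sigma> * \<sigma>))) ` eps_ball D \<epsilon> \<rho>)
           = (\<Sum>i<D. (min (max (lam ! i) x) y)\<^sup>2)
       \<and> smooth_renyi2 D \<epsilon> \<rho> = - log 2 (\<Sum>i<D. (min (max (lam ! i) x) y)\<^sup>2)"
proof -
  have \<rho>: "\<rho> \<in> carrier_mat D D" "hermitian_mat \<rho>" "psd_mat D \<rho>" "tr_mat \<rho> = 1"
    using dens unfolding density_op_def psd_mat_def by auto
  obtain U where U: "unitary D U"
    and rho: "\<rho> = U * mat_diag D (\<lambda>i. complex_of_real (lam ! i)) * adj_mat U"
    using hermitian_unitary_diagonalization_real[OF \<rho>(1,2) spec] by blast
  have lam_nonneg: "0 \<le> lam ! i" if "i < D" for i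
    using psd_unitary_conj_mat_diagD[OF U _ that] \<rho>(3) rho by simp
  have "(\<Sum>i<D. lam ! i) = 1"
    using \<rho>(4) Re_tr_mat_unitary_conj_mat_diag[OF U, of "\<lambda>i. lam ! i"] rho by simp
  then have "lam \<noteq> []"
    using len by auto
  then have "Min (set lam) \<in> set lam"
    by simp
  then obtain j where "j < D" "lam ! j = Min (set lam)"
    using len by (auto simp: in_set_conv_nth)
  then have "0 \<le> x"
    using x_ge lam_nonneg[of j] by simp
  have "Inf ((\<lambda>\<sigma>. Re (tr_mat (\<sigma> * \<sigma>))) ` eps_ball D \<epsilon> \<rho>) = (\<Sum>i<D. (min (max (lam ! i) x) y)\<^sup>2)"
    by (rule Inf_tr_square_eps_ball_clipped[OF U rho]) fact+
  then show ?thesis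
    unfolding smooth_renyi2_def by simp
qed

end
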